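(* Let $(X,d,\preceq)$ be an ordered metric space such that $(X,d)$ is complete, and let $f,g:X\to X$. Suppose: (i) $f(X)\subseteq g(X)$; (ii) $f$ is $g$-comparable; (iii) the pair $(f,g)$ is compatible; (iv) $g$ is continuous; (v) either $f$ is continuous or $(X,d,\preceq)$ has the $g$-TCC property; (vi) there exists $x_0\in X$ such that $g(x_0)\prec\succ f(x_0)$; (vii) there exists $\alpha\in[0,1)$ such that $d(fx,fy)\le \alpha\, d(gx,gy)$ for all $x,y\in X$ with $g(x)\prec\succ g(y)$. Then $f$ and $g$ have a coincidence point, i.e. there is $x\in X$ with $g(x)=f(x)$.
   Context: An ordered metric space $(X,d,\preceq)$ is a nonempty set $X$ with a metric $d$ and a partial order $\preceq$. For $x,y\in X$, write $x\prec\succ y$ ("comparable") if $x\preceq y$ or $y\preceq x$. For self-maps $f,g$ of $X$: $f$ is $g$-comparable if for all $x,y\in X$, $g(x)\prec\succ g(y)$ implies $f(x)\prec\succ f(y)$. The pair $(f,g)$ is compatible if $\lim_{n\to\infty} d(gfx_n,fgx_n)=0$ whenever $\{x_n\}$ is a sequence in $X$ such that $\{g(x_n)\}$ and $\{f(x_n)\}$ converge to the same point of $X$. A sequence $\{x_n\}$ is termwise monotone if $x_n\prec\succ x_{n+1}$ for all $n\ge 0$. $(X,d,\preceq)$ has the $g$-TCC property if for every termwise monotone sequence $\{x_n\}$ in $X$ converging (in $d$) to some $x\in X$ there is a subsequence $\{x_{n_k}\}$ with $g(x_{n_k})\prec\succ g(x)$ for all $k$. A coincidence point of $f,g$ is $x\in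 X$ with $g(x)=f(x)$. *)

theory Defs
  imports "HOL-Analysis.Analysis"
begin

definition partial_order_rel :: "('a \<Rightarrow> 'a \<Rightarrow> bool) \<Rightarrow> bool" where
  "partial_order_rel le \<longleftrightarrow> (\<forall>x. le x x) \<and> (\<forall>x y. le x y \<and> le y x \<longrightarrow> x = y)
     \<and> (\<forall>x y z. le x y \<and> le y z \<longrightarrow> le x z)"

definition comparable :: "('a \<Rightarrow> 'a \<Rightarrow> bool) \<Rightarrow> 'a \<Rightarrow> 'a \<Rightarrow> bool" where
  "comparable le x y \<longleftrightarrow> le x y \<or> le y x"

definition g_comparable :: "('a \<Rightarrow> 'a \<Rightarrow> bool) \<Rightarrow> ('a \<Rightarrow> 'a) \<Rightarrow> ('a \<Rightarrow> 'a) \<Rightarrow> bool" where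
  "g_comparable le f g \<longleftrightarrow> (\<forall>x y. comparable le (g x) (g y) \<longrightarrow> comparable le (f x) (f y))"

definition compatible_pair :: "('a::metric_space \<Rightarrow> 'a) \<Rightarrow> ('a \<Rightarrow> 'a) \<Rightarrow> bool" where
  "compatible_pair f g \<longleftrightarrow> (\<forall>xs :: nat \<Rightarrow> 'a. \<forall>z.
      (\<lambda>n. g (xs n)) \<longlonglongrightarrow> z \<and> (\<lambda>n. f (xs n)) \<longlonglongrightarrow> z
      \<longrightarrow> (\<lambda>n. dist (g (f (xs n))) (f (g (xs n)))) \<longlonglongrightarrow> 0)"

definition termwise_monotone :: "('a \<Rightarrow> 'a \<Rightarrow> bool) \<Rightarrow> (nat \<Rightarrow> 'a) \<Rightarrow> bool" where
  "termwise_monotone le xs \<longleftrightarrow> (\<forall>n. comparable le (xs n) (xs (Suc n)))"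

definition g_TCC :: "('a::metric_space \<Rightarrow> 'a \<Rightarrow> bool) \<Rightarrow> ('a \<Rightarrow> 'a) \<Rightarrow> bool" where
  "g_TCC le g \<longleftrightarrow> (\<forall>(xs :: nat \<Rightarrow> 'a) (x :: 'a). termwise_monotone le xs \<and> xs \<longlonglongrightarrow> x \<longrightarrow>
      (\<exists>r :: nat \<Rightarrow> nat. strict_mono r \<and> (\<forall>k. comparable le (g (xs (r k))) (g x))))"

end

theory Submission
  imports Defs
begin

text \<open>
  Jungck's iteration: since \<open>f(X) \<subseteq> g(X)\<close> one can choose \<open>x\<^sub>n\<close> with
  \<open>g x\<^sub>n\<^sub>+\<^sub>1 = f x\<^sub>n\<close>. By \<open>g\<close>-comparability consecutive points \<open>g x\<^sub>n\<close> stay comparable,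
  so the contraction condition applies to every step and \<open>g x\<^sub>n\<close> is Cauchy; its limit \<open>z\<close>
  is also the limit of \<open>f x\<^sub>n\<close>. Compatibility and continuity of \<open>g\<close> make \<open>f (g x\<^sub>n)\<close>
  converge to \<open>g z\<close>. It also converges to \<open>f z\<close>: directly if \<open>f\<close> is continuous, and
  otherwise along a subsequence on which the \<open>g\<close>-TCC property makes \<open>g (g x\<^sub>n)\<close> comparable
  to \<open>g z\<close>, so that the contraction condition applies. Hence \<open>g z = f z\<close>.
  Only comparability is ever used.
\<close>

lemma dist_le_geometric_tail:
  fixes y :: "nat \<Rightarrow> 'a::metric_space"
  assumes "0 \<le> a" "a < 1"
    and steps: "\<And>n. dist (y n) (y (Suc n)) \<le> C * a ^ n"
  shows "dist (y m) (y (m + k)) \<le> C * a ^ m / (1 - a)"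
proof -
  have "C \<ge> 0" using order_trans[OF zero_le_dist steps[of 0]] by simp
  have partial_sums: "dist (y m) (y (m + k)) \<le> C * (\<Sum>i<k. a ^ (m + i))" for k
  proof (induction k)
    case (Suc k)
    have "dist (y m) (y (m + Suc k)) \<le> dist (y m) (y (m + k)) + dist (y (m + k)) (y (Suc (m + k)))"
      by (simp add: dist_triangle)
    also have "\<dots> \<le> C * (\<Sum>i<k. a ^ (m + i)) + C * a ^ (m + k)"
      using Suc steps by (meson add_mono)
    finally show ?case by (simp add: algebra_simps)
  qed simp
  have "(\<Sum>i<k. a ^ (m + i)) = a ^ m * ((1 - a ^ k) / (1 - a))"
    using assms(2) by (simp add: power_add sum_distrib_left[symmetric] sum_gp_strict)
  also have "\<dots> \<le> a ^ m / (1 - a)"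
    using assms(1,2) by (simp add: divide_right_mono mult_left_le)
  finally have "C * (\<Sum>i<k. a ^ (m + i)) \<le> C * (a ^ m / (1 - a))"
    using \<open>C \<ge> 0\<close> by (rule mult_left_mono)
  then show ?thesis
    using order_trans[OF partial_sums[of k]] by simp
qed

lemma Cauchy_if_dist_Suc_geometric:
  fixes y :: "nat \<Rightarrow> 'a::metric_space"
  assumes "0 \<le> a" "a < 1"
    and steps: "\<And>n. dist (y n) (y (Suc n)) \<le> C * a ^ n"
  shows "Cauchy y"
  unfolding Cauchy_altdef2
proof (intro allI impI)
  fix e :: real
  assume "e > 0"
  have "(\<lambda>n. C * a ^ n / (1 - a)) \<longlonglongrightarrow> 0"
    using assms(1,2) by (intro tendsto_eq_intros LIMSEQ_power_zero) auto
  from order_tendstoD(2)[OF this \<open>e > 0\<close>] obtain N where "C * a ^ N / (1 - a) < e"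
    unfolding eventually_sequentially by blast
  then have "dist (y n) (y N) < e" if "n \<ge> N" for n
    using dist_le_geometric_tail[OF assms, of N "n - N"] that by (simp add: dist_commute)
  then show "\<exists>N. \<forall>n\<ge>N. dist (y n) (y N) < e" by blast
qed

lemma Cauchy_if_dist_Suc_contractive:
  fixes y :: "nat \<Rightarrow> 'a::metric_space"
  assumes "0 \<le> a" "a < 1"
    and contr: "\<And>n. dist (y (Suc n)) (y (Suc (Suc n))) \<le> a * dist (y n) (y (Suc n))"
  shows "Cauchy y"
proof (rule Cauchy_if_dist_Suc_geometric[OF assms(1,2)])
  show "dist (y n) (y (Suc n)) \<le> dist (y 0) (y 1) * a ^ n" for n
  proof (induction n)
    case (Suc n)
    have "dist (y (Suc n)) (y (Suc (Suc n))) \<le> a * (dist (y 0) (y 1) * a ^ n)"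
      using contr[of n] Suc assms(1) by (meson mult_left_mono order_trans)
    then show ?case by (simp add: algebra_simps)
  qed simp
qed

lemma LIMSEQ_dist_transform:
  fixes u v :: "nat \<Rightarrow> 'a::metric_space"
  assumes "u \<longlonglongrightarrow> l" "(\<lambda>n. dist (u n) (v n)) \<longlonglongrightarrow> 0"
  shows "v \<longlonglongrightarrow> l"
proof -
  have bound: "(\<lambda>n. dist (u n) (v n) + dist (u n) l) \<longlonglongrightarrow> 0"
    using assms tendsto_add_zero tendsto_dist_iff by blast
  have "(\<lambda>n. dist (v n) l) \<longlonglongrightarrow> 0"
    by (rule tendsto_sandwich[OF _ _ tendsto_const bound]) (simp_all add: dist_triangle3)
  then show ?thesis using tendsto_dist_iff by blast
qed

lemma Jungck_sequence_exists:
  assumes "range f \<subseteq> range g"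
  obtains xs where "xs 0 = x0" "\<And>n. g (xs (Suc n)) = f (xs n)"
proof -
  define h where "h y = inv_into UNIV g (f y)" for y
  have h: "g (h y) = f y" for y
    unfolding h_def by (rule f_inv_into_f[OF subsetD[OF assms rangeI]])
  show ?thesis
    by (rule that[of "rec_nat x0 (\<lambda>_. h)"]) (simp_all add: h)
qed

lemma Jungck_sequence_comparable:
  assumes "g_comparable le f g" "comparable le (g (xs 0)) (f (xs 0))"
    and step: "\<And>n. g (xs (Suc n)) = f (xs n)"
  shows "comparable le (g (xs n)) (g (xs (Suc n)))"
proof (induction n)
  case 0
  then show ?case using assms(2) by (simp add: step)
next
  case (Suc n)
  then show ?case using assms(1) unfolding g_comparable_def by (simp add: step)
qed

lemma compatible_pair_tendsto_fg:
  assumes "compatible_pair f g" "isCont g z"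
    and "(\<lambda>n. g (xs n)) \<longlonglongrightarrow> z" "(\<lambda>n. f (xs n)) \<longlonglongrightarrow> z"
  shows "(\<lambda>n. f (g (xs n))) \<longlonglongrightarrow> g z"
proof (rule LIMSEQ_dist_transform)
  show "(\<lambda>n. g (f (xs n))) \<longlonglongrightarrow> g z"
    using assms(2,4) by (rule isCont_tendsto_compose)
  show "(\<lambda>n. dist (g (f (xs n))) (f (g (xs n)))) \<longlonglongrightarrow> 0"
    using assms(1,3,4) unfolding compatible_pair_def by blast
qed

text \<open>The constant \<open>\<alpha>\<close> need not be nonnegative here: the bound only has to vanish.\<close>

lemma g_TCC_subseq_tendsto_f:
  fixes le :: "'a::metric_space \<Rightarrow> 'a \<Rightarrow> bool"
  assumes "g_TCC le g" "termwise_monotone le ys" "ys \<longlonglongrightarrow> z" "isCont g z"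
    and contr: "\<And>x y. comparable le (g x) (g y) \<Longrightarrow> dist (f x) (f y) \<le> \<alpha> * dist (g x) (g y)"
  obtains r where "strict_mono r" "(\<lambda>k. f (ys (r k))) \<longlonglongrightarrow> f z"
proof -
  obtain r :: "nat \<Rightarrow> nat"
    where r: "strict_mono r" and cmp: "\<And>k. comparable le (g (ys (r k))) (g z)"
    using assms(1-3) unfolding g_TCC_def by blast
  have "(\<lambda>k. g (ys (r k))) \<longlonglongrightarrow> g z"
    using isCont_tendsto_compose[OF assms(4) LIMSEQ_subseq_LIMSEQ[OF assms(3) r]]
    by (simp add: o_def)
  then have bound: "(\<lambda>k. \<alpha> * dist (g (ys (r k))) (g z)) \<longlonglongrightarrow> 0"
    using tendsto_dist_iff tendsto_mult_right_zero by blast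
  have "(\<lambda>k. dist (f (ys (r k))) (f z)) \<longlonglongrightarrow> 0"
    by (rule tendsto_sandwich[OF _ _ tendsto_const bound]) (simp_all add: contr cmp)
  then show ?thesis
    using r that tendsto_dist_iff by blast
qed

lemma Jungck_sequence_converges:
  fixes f g :: "'a::complete_space \<Rightarrow> 'a"
  assumes "0 \<le> \<alpha>" "\<alpha> < 1"
    and contr: "\<And>n. dist (f (xs n)) (f (xs (Suc n))) \<le> \<alpha> * dist (g (xs n)) (g (xs (Suc n)))"
    and step: "\<And>n. g (xs (Suc n)) = f (xs n)"
  obtains z where "(\<lambda>n. g (xs n)) \<longlonglongrightarrow> z" "(\<lambda>n. f (xs n)) \<longlonglongrightarrow> z"
proof -
  have "Cauchy (\<lambda>n. g (xs n))"
  proof (rule Cauchy_if_dist_Suc_contractive[OF assms(1,2)])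
    show "dist (g (xs (Suc n))) (g (xs (Suc (Suc n)))) \<le> \<alpha> * dist (g (xs n)) (g (xs (Suc n)))" for n
      using contr[of "Suc n"] contr[of n] by (simp only: step)
  qed
  then obtain z where gz: "(\<lambda>n. g (xs n)) \<longlonglongrightarrow> z"
    using Cauchy_convergent convergent_def by blast
  moreover have "(\<lambda>n. f (xs n)) \<longlonglongrightarrow> z"
    using LIMSEQ_Suc[OF gz] by (simp add: step)
  ultimately show ?thesis
    using that by blast
qed

lemma subseq_tendsto_f_if_continuous_or_g_TCC:
  fixes le :: "'a::metric_space \<Rightarrow> 'a \<Rightarrow> bool"
  assumes "continuous_on UNIV f \<or> g_TCC le g" "termwise_monotone le ys" "ys \<longlonglongrightarrow> z"
    and "isCont g z"
    and contr: "\<And>x y. comparable le (g x) (g y) \<Longrightarrow> dist (f x) (f y) \<le> \<alpha> * dist (g x) (g y)"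
  obtains r where "strict_mono r" "(\<lambda>k. f (ys (r k))) \<longlonglongrightarrow> f z"
proof (cases "continuous_on UNIV f")
  case True
  then have "(\<lambda>k. f (ys k)) \<longlonglongrightarrow> f z"
    using assms(3) isCont_tendsto_compose continuous_on_eq_continuous_at open_UNIV by blast
  then show ?thesis
    using that[of id] by (simp add: strict_mono_id)
next
  case False
  then show ?thesis
    using g_TCC_subseq_tendsto_f[OF _ assms(2-4) contr] assms(1) that by blast
qed

theorem theorem3p3:
  fixes le :: "'a::complete_space \<Rightarrow> 'a \<Rightarrow> bool"
    and f g :: "'a \<Rightarrow> 'a"
  assumes "partial_order_rel le"
    and "range f \<subseteq> range g"
    and "g_comparable le f g"
    and "compatible_pair f g"
    and "continuous_on UNIV g"
    and "continuous_on UNIV f \<or> g_TCC le g"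
    and "\<exists>x0. comparable le (g x0) (f x0)"
    and "\<exists>\<alpha>::real. 0 \<le> \<alpha> \<and> \<alpha> < 1 \<and>
           (\<forall>x y. comparable le (g x) (g y) \<longrightarrow> dist (f x) (f y) \<le> \<alpha> * dist (g x) (g y))"
  shows "\<exists>x. g x = f x"
proof -
  obtain x0 where x0: "comparable le (g x0) (f x0)"
    using assms(7) by blast
  obtain \<alpha> :: real where "0 \<le> \<alpha>" "\<alpha> < 1"
    and contr: "\<And>x y. comparable le (g x) (g y) \<Longrightarrow> dist (f x) (f y) \<le> \<alpha> * dist (g x) (g y)"
    using assms(8) by blast
  obtain xs where "xs 0 = x0" and step: "\<And>n. g (xs (Suc n)) = f (xs n)"
    using Jungck_sequence_exists[OF assms(2)] by blast
  have cmp: "comparable le (g (xs n)) (g (xs (Suc n)))" for n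
    using Jungck_sequence_comparable[OF assms(3)] x0 step \<open>xs 0 = x0\<close> by blast
  obtain z where gz: "(\<lambda>n. g (xs n)) \<longlonglongrightarrow> z" and fz: "(\<lambda>n. f (xs n)) \<longlonglongrightarrow> z"
    using Jungck_sequence_converges[where f = f and g = g and xs = xs,
        OF \<open>0 \<le> \<alpha>\<close> \<open>\<alpha> < 1\<close> contr[OF cmp] step]
    by blast
  have g_cont: "isCont g x" for x
    using assms(5) by (simp add: continuous_on_eq_continuous_at)
  have "termwise_monotone le (\<lambda>n. g (xs n))"
    unfolding termwise_monotone_def using cmp by blast
  then obtain r where r: "strict_mono r" and f_lim: "(\<lambda>k. f (g (xs (r k)))) \<longlonglongrightarrow> f z"
    using subseq_tendsto_f_if_continuous_or_g_TCC[OF assms(6) _ gz g_cont contr] by blast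
  have "(\<lambda>k. f (g (xs (r k)))) \<longlonglongrightarrow> g z"
    using LIMSEQ_subseq_LIMSEQ[OF compatible_pair_tendsto_fg[OF assms(4) g_cont gz fz] r]
    by (simp add: o_def)
  then have "g z = f z"
    using f_lim by (rule LIMSEQ_unique)
  then show ?thesis ..
qed

end
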